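(* Fix a constant $c>0$. The class $\mathcal{A}_c$ of bucket-based sorting algorithms, viewed as functions on arrays $x\in\mathbb{R}^n$ via $x\mapsto\mathrm{cost}(A,x)$ (the number of comparisons used by $A$ on $x$), has pseudo-dimension $O(n^{1+c})$.
   Context: A bucket-based sorting algorithm in $\mathcal{A}_c$ (for sorting $n$ reals $a_1,\dots,a_n$ in the comparison model) is specified by: (i) $n$ bucket boundaries $b_1<b_2<\dots<b_n$; (ii) for each $i=1,\dots,n$, a search tree $T_i$ described by $O(n^c)$ bits used to place element $a_i$ into its correct bucket (a search not resolved by $T_i$ is completed by standard binary search over the buckets). The algorithm distributes each element into its bucket this way, sorts each bucket with InsertionSort, and concatenates. Pseudo-dimension: a finite set $\{x_1,\dots,x_m\}$ is shattered by a class $\mathcal{H}$ of real functions if there exist reals $r_i$ such that for every $T\subseteq\{1,\dots,m\}$ some $h\in\mathcal{H}$ has $h(x_i)>r_i\iff i\in T$; the pseudo-dimension is the largest size of a shattered set. *)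

theory Defs
  imports Complex_Main "HOL-Library.Extended_Real"
begin

definition shatters :: "('a \<Rightarrow> real) set \<Rightarrow> 'a set \<Rightarrow> bool" where
  "shatters H X \<longleftrightarrow> finite X \<and>
     (\<exists>r :: 'a \<Rightarrow> real. \<forall>T \<subseteq> X. \<exists>h \<in> H. \<forall>x \<in> X. (h x > r x \<longleftrightarrow> x \<in> T))"

definition pseudo_dim :: "'a set \<Rightarrow> ('a \<Rightarrow> real) set \<Rightarrow> ereal" where
  "pseudo_dim D H = (SUP X \<in> {X. X \<subseteq> D \<and> shatters H X}. ereal (real (card X)))"

text \<open>Boundaries are a strictly increasing list b of length n; boundary j (1 \<le> j \<le> n)
  is b ! (j - 1). Bucket k (0 \<le> k \<le> n) consists of reals a with b_k \<le> a < b_(k+1),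
  where b_0 = -\<infinity> and b_(n+1) = +\<infinity>.\<close>

text \<open>Standard binary search over the candidate buckets lo..hi; returns
  (number of comparisons, bucket found).\<close>
function bsearch :: "real list \<Rightarrow> real \<Rightarrow> nat \<Rightarrow> nat \<Rightarrow> nat \<times> nat" where
  "bsearch b a lo hi =
     (if hi \<le> lo then (0, lo)
      else (let m = (lo + hi + 1) div 2 in
            if a < b ! (m - 1)
            then (let (c, k) = bsearch b a lo (m - 1) in (c + 1, k))
            else (let (c, k) = bsearch b a m hi in (c + 1, k))))"
  by pat_completeness auto
termination
  by (relation "measure (\<lambda>(b, a, lo, hi). hi - lo)") auto

text \<open>Search trees: an internal node SNode j l r compares the element with boundary j
  (go left if smaller); reaching a leaf, the search is completed by binary search over
  the buckets still compatible with the comparisons made (zero extra cost if resolved).\<close>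
datatype stree = SLeaf | SNode nat stree stree

fun labels :: "stree \<Rightarrow> nat set" where
  "labels SLeaf = {}"
| "labels (SNode j l r) = insert j (labels l \<union> labels r)"

fun tsearch :: "real list \<Rightarrow> real \<Rightarrow> stree \<Rightarrow> nat \<Rightarrow> nat \<Rightarrow> nat \<times> nat" where
  "tsearch b a SLeaf lo hi = bsearch b a lo hi"
| "tsearch b a (SNode j l r) lo hi =
     (if a < b ! (j - 1)
      then (let (c, k) = tsearch b a l lo (min hi (j - 1)) in (c + 1, k))
      else (let (c, k) = tsearch b a r (max lo j) hi in (c + 1, k)))"

text \<open>InsertionSort comparison count: insert each element into the sorted prefix,
  scanning the prefix from its right end.\<close>
fun ins_cost :: "real \<Rightarrow> real list \<Rightarrow> nat" where
  "ins_cost x [] = 0"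
| "ins_cost x (r # rs) = 1 + (if r > x then ins_cost x rs else 0)"

fun isort_aux :: "real list \<Rightarrow> real list \<Rightarrow> nat" where
  "isort_aux s [] = 0"
| "isort_aux s (x # xs) = ins_cost x (rev s) + isort_aux (insort x s) xs"

definition isort_cost :: "real list \<Rightarrow> nat" where
  "isort_cost xs = isort_aux [] xs"

text \<open>An algorithm is a pair (boundaries, list of n search trees).
  cost A x = comparisons for distributing every x_i with T_i, plus comparisons of
  InsertionSort on every bucket (elements in a bucket kept in input order).\<close>
type_synonym bucket_alg = "real list \<times> stree list"

definition cost :: "bucket_alg \<Rightarrow> real list \<Rightarrow> nat" where
  "cost A x =
    (let (b, Ts) = A; n = length b;
         srch = (\<lambda>i. tsearch b (x ! i) (Ts ! i) 0 n)
     in (\<Sum>i<n. fst (srch i))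
        + (\<Sum>k\<le>n. isort_cost [x ! i. i \<leftarrow> [0..<n], snd (srch i) = k]))"

text \<open>The class A_c for arrays of size n: each tree T_i is described (under a fixed
  injective description scheme enc into bit strings) by at most K * n^c bits.\<close>
definition alg_class :: "(stree \<Rightarrow> bool list) \<Rightarrow> real \<Rightarrow> real \<Rightarrow> nat \<Rightarrow> bucket_alg set" where
  "alg_class enc K c n =
     {(b, Ts). length b = n \<and> sorted_wrt (<) b \<and> length Ts = n \<and>
        (\<forall>T \<in> set Ts. labels T \<subseteq> {1..n} \<and> real (length (enc T)) \<le> K * real n powr c)}"

definition cost_class :: "(stree \<Rightarrow> bool list) \<Rightarrow> real \<Rightarrow> real \<Rightarrow> nat \<Rightarrow> (real list \<Rightarrow> real) set" where
  "cost_class enc K c n = (\<lambda>A x. real (cost A x)) ` alg_class enc K c n"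

end

theory Submission
  imports Defs "HOL-Library.FuncSet"
begin

text \<open>On a shattered set X of m arrays of length n, the cost of an algorithm is
  determined by its n search trees and, for each boundary, by which of the at most mn
  entries of the arrays in X lie below it. Trees of description length at most K n^c
  admit at most 2^(K n^c + 1) choices and a boundary at most mn + 1 cuts, so the cost
  functions have at most 2^((K n^c + 1) n) (mn + 1)^n distinct restrictions to X.
  Shattering needs 2^m of them, and taking logarithms gives m = O(n^(1+c)).\<close>

lemma bsearch_cong:
  assumes "\<forall>j\<in>{1..n}. a < b ! (j - 1) \<longleftrightarrow> a < b' ! (j - 1)" and "hi \<le> n"
  shows "bsearch b a lo hi = bsearch b' a lo hi"
  using assms
proof (induction b a lo hi rule: bsearch.induct)
  case (1 b a lo hi)
  define m where "m = (lo + hi + 1) div 2"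
  show ?case
  proof (cases "hi \<le> lo")
    case True
    then show ?thesis by simp
  next
    case False
    then have m: "m \<in> {1..n}" "m \<le> hi" using "1.prems"(2) by (auto simp: m_def)
    then have "a < b ! (m - 1) \<longleftrightarrow> a < b' ! (m - 1)" using "1.prems"(1) by blast
    with "1.IH"[OF False m_def] "1.prems" m show ?thesis
      unfolding bsearch.simps[of _ _ lo hi] Let_def m_def[symmetric] by (simp add: False)
  qed
qed

lemma tsearch_cong:
  assumes "\<forall>j\<in>{1..n}. a < b ! (j - 1) \<longleftrightarrow> a < b' ! (j - 1)"
    and "hi \<le> n" and "labels T \<subseteq> {1..n}"
  shows "tsearch b a T lo hi = tsearch b' a T lo hi"
  using assms(2,3)
proof (induction T arbitrary: lo hi)
  case SLeaf
  then show ?case using bsearch_cong[OF assms(1)] by (simp del: bsearch.simps)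
next
  case (SNode j l r)
  then have "a < b ! (j - 1) \<longleftrightarrow> a < b' ! (j - 1)" using assms(1) by auto
  with SNode show ?case by simp
qed

lemma cost_cong:
  assumes "length b = n" and "length b' = n" and "length Ts = n" and "length x = n"
    and "\<forall>T\<in>set Ts. labels T \<subseteq> {1..n}"
    and "\<forall>v\<in>set x. \<forall>j<n. v < b ! j \<longleftrightarrow> v < b' ! j"
  shows "cost (b, Ts) x = cost (b', Ts) x"
proof -
  have search: "tsearch b (x ! i) (Ts ! i) 0 n = tsearch b' (x ! i) (Ts ! i) 0 n" if "i < n" for i
  proof (rule tsearch_cong)
    show "\<forall>j\<in>{1..n}. x ! i < b ! (j - 1) \<longleftrightarrow> x ! i < b' ! (j - 1)"
      using assms(4,6) that by auto
    show "labels (Ts ! i) \<subseteq> {1..n}" using assms(3,5) that by auto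
  qed simp
  have buckets: "[x ! i. i \<leftarrow> [0..<n], snd (tsearch b (x ! i) (Ts ! i) 0 n) = k]
           = [x ! i. i \<leftarrow> [0..<n], snd (tsearch b' (x ! i) (Ts ! i) 0 n) = k]" for k
    by (rule arg_cong[where f = concat], rule map_cong) (auto simp: search)
  show ?thesis unfolding cost_def using assms(1,2) buckets search by (simp add: Let_def)
qed

lemma card_lower_cuts_le:
  fixes V :: "'a :: linorder set"
  assumes "finite V"
  shows "card {{v \<in> V. v < t} | t. True} \<le> card V + 1"
proof -
  let ?D = "{{v \<in> V. v < t} | t. True}"
  have "inj_on card ?D"
  proof (rule inj_onI)
    fix A B assume "A \<in> ?D" "B \<in> ?D" "card A = card B"
    moreover from \<open>A \<in> ?D\<close> \<open>B \<in> ?D\<close> have "A \<subseteq> B \<or> B \<subseteq> A" by auto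
    moreover have "finite A" "finite B" using \<open>A \<in> ?D\<close> \<open>B \<in> ?D\<close> assms by auto
    ultimately show "A = B" using card_subset_eq by metis
  qed
  then have "card ?D = card (card ` ?D)" by (simp add: card_image)
  also have "\<dots> \<le> card {..card V}"
  proof (rule card_mono)
    show "card ` ?D \<subseteq> {..card V}" using assms by (auto intro: card_mono)
  qed simp
  finally show ?thesis by simp
qed

lemma card_code_length_le:
  fixes enc :: "'a \<Rightarrow> bool list"
  assumes "inj enc"
  shows "finite {T. length (enc T) \<le> L}" and "card {T. length (enc T) \<le> L} \<le> 2 ^ Suc L"
proof -
  let ?B = "{bs :: bool list. set bs \<subseteq> UNIV \<and> length bs \<le> L}"
  have finB: "finite ?B" by (rule finite_lists_length_le) simp
  have codes: "enc ` {T. length (enc T) \<le> L} \<subseteq> ?B" by auto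
  moreover have inj: "inj_on enc {T. length (enc T) \<le> L}"
    using assms by (simp add: inj_on_def inj_def)
  ultimately show "finite {T. length (enc T) \<le> L}"
    using finB by (metis finite_imageD finite_subset)
  have "card {T. length (enc T) \<le> L} \<le> card ?B" using card_inj_on_le[OF inj codes finB] .
  also have "\<dots> = (\<Sum>i<Suc L. 2 ^ i)"
    using card_lists_length_le[of "UNIV :: bool set" L] by (simp add: lessThan_Suc_atMost)
  also have "\<dots> < 2 ^ Suc L" using sum_power2[of "Suc L"] by (simp add: atLeast0LessThan)
  finally show "card {T. length (enc T) \<le> L} \<le> 2 ^ Suc L" by simp
qed

lemma card_image_le_if_factors:
  assumes "\<And>x y. x \<in> D \<Longrightarrow> y \<in> D \<Longrightarrow> s x = s y \<Longrightarrow> g x = g y"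
    and "s ` D \<subseteq> S" and "finite S"
  shows "finite (g ` D)" and "card (g ` D) \<le> card S"
proof -
  have "g x = g (inv_into D s (s x))" if "x \<in> D" for x
  proof (rule assms(1)[OF that])
    show "inv_into D s (s x) \<in> D" using that by (simp add: inv_into_into)
    show "s x = s (inv_into D s (s x))" using that by (simp add: f_inv_into_f)
  qed
  then have g: "g ` D = (\<lambda>y. g (inv_into D s y)) ` s ` D"
    by (simp add: image_image cong: image_cong)
  have "finite (s ` D)" using assms(2,3) by (rule finite_subset)
  then show "finite (g ` D)" unfolding g by simp
  have "card (g ` D) \<le> card (s ` D)" unfolding g using \<open>finite (s ` D)\<close> by (rule card_image_le)
  also have "\<dots> \<le> card S" using assms(2,3) by (rule card_mono[rotated])
  finally show "card (g ` D) \<le> card S" .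
qed

lemma two_pow_card_le_card_traces:
  assumes "shatters H X" and "finite ((\<lambda>h. restrict h X) ` H)"
  shows "2 ^ card X \<le> card ((\<lambda>h. restrict h X) ` H)"
proof -
  from assms(1) obtain r where r: "\<forall>T \<subseteq> X. \<exists>h \<in> H. \<forall>x \<in> X. (h x > r x \<longleftrightarrow> x \<in> T)"
    and "finite X" unfolding shatters_def by blast
  have "Pow X \<subseteq> (\<lambda>f. {x \<in> X. f x > r x}) ` (\<lambda>h. restrict h X) ` H"
  proof
    fix T assume "T \<in> Pow X"
    with r obtain h where "h \<in> H" "\<forall>x \<in> X. (h x > r x \<longleftrightarrow> x \<in> T)" by blast
    with \<open>T \<in> Pow X\<close> show "T \<in> (\<lambda>f. {x \<in> X. f x > r x}) ` (\<lambda>h. restrict h X) ` H"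
      by (intro image_eqI[where x = "restrict h X"] imageI) auto
  qed
  then have "card (Pow X) \<le> card ((\<lambda>f. {x \<in> X. f x > r x}) ` (\<lambda>h. restrict h X) ` H)"
    by (rule card_mono[OF finite_imageI[OF assms(2)]])
  also have "\<dots> \<le> card ((\<lambda>h. restrict h X) ` H)" using assms(2) by (rule card_image_le)
  finally have "card (Pow X) \<le> card ((\<lambda>h. restrict h X) ` H)" .
  then show ?thesis using card_Pow[OF \<open>finite X\<close>] by simp
qed

lemma card_cost_traces_le:
  fixes enc :: "stree \<Rightarrow> bool list" and X :: "real list set"
  assumes "inj enc" and "finite X" and X: "X \<subseteq> {x. length x = n}"
    and L: "K * real n powr c < real (Suc L)"
  shows "finite ((\<lambda>h. restrict h X) ` cost_class enc K c n)"
    and "card ((\<lambda>h. restrict h X) ` cost_class enc K c n) \<le> (2 ^ Suc L) ^ n * (card X * n + 1) ^ n"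
proof -
  define V where "V = \<Union> (set ` X)"
  define Tr where "Tr = {T. length (enc T) \<le> L}"
  define Cuts where "Cuts = {{v \<in> V. v < t} | t. True}"
  define S
    where "S = {Ts. set Ts \<subseteq> Tr \<and> length Ts = n} \<times> {cs. set cs \<subseteq> Cuts \<and> length cs = n}"
  define sig where "sig A = (snd A, map (\<lambda>j. {v \<in> V. v < fst A ! j}) [0..<n])" for A :: bucket_alg
  have "finite V" using assms(2) by (simp add: V_def)
  have "card V \<le> (\<Sum>x\<in>X. card (set x))" unfolding V_def using assms(2) by (rule card_UN_le)
  also have "\<dots> \<le> (\<Sum>x\<in>X. n)" using X by (intro sum_mono) (auto intro: card_length[THEN order_trans])
  finally have card_V: "card V \<le> card X * n" by simp
  have "finite Cuts" unfolding Cuts_def using \<open>finite V\<close> by (auto intro: finite_subset[of _ "Pow V"])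
  have "finite Tr" "card Tr \<le> 2 ^ Suc L" using card_code_length_le[OF assms(1)] by (simp_all add: Tr_def)
  have "finite S" unfolding S_def using \<open>finite Tr\<close> \<open>finite Cuts\<close> by (simp add: finite_lists_length_eq)
  have "card S = card Tr ^ n * card Cuts ^ n" unfolding S_def using \<open>finite Tr\<close> \<open>finite Cuts\<close>
    by (simp add: card_cartesian_product card_lists_length_eq)
  also have "\<dots> \<le> (2 ^ Suc L) ^ n * (card X * n + 1) ^ n"
    using \<open>card Tr \<le> 2 ^ Suc L\<close> card_lower_cuts_le[OF \<open>finite V\<close>] card_V
    by (intro mult_mono power_mono) (auto simp: Cuts_def)
  finally have card_S: "card S \<le> (2 ^ Suc L) ^ n * (card X * n + 1) ^ n" .
  have sig_S: "sig ` alg_class enc K c n \<subseteq> S"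
  proof (rule image_subsetI)
    fix A assume "A \<in> alg_class enc K c n"
    moreover obtain b Ts where "A = (b, Ts)" by fastforce
    ultimately have "length Ts = n" and "\<forall>T \<in> set Ts. real (length (enc T)) \<le> K * real n powr c"
      by (auto simp: alg_class_def)
    with L have "set Ts \<subseteq> Tr" by (force simp: Tr_def)
    with \<open>length Ts = n\<close> show "sig A \<in> S" by (auto simp: S_def sig_def Cuts_def \<open>A = (b, Ts)\<close>)
  qed
  have same_trace: "restrict (\<lambda>x. real (cost A x)) X = restrict (\<lambda>x. real (cost A' x)) X"
    if algs: "A \<in> alg_class enc K c n" "A' \<in> alg_class enc K c n" and "sig A = sig A'" for A A'
  proof -
    obtain b Ts b' Ts' where A: "A = (b, Ts)" and A': "A' = (b', Ts')" by fastforce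
    have "Ts' = Ts"
      and cuts: "map (\<lambda>j. {v \<in> V. v < b ! j}) [0..<n] = map (\<lambda>j. {v \<in> V. v < b' ! j}) [0..<n]"
      using \<open>sig A = sig A'\<close> by (simp_all add: sig_def A A')
    have same_cut: "v < b ! j \<longleftrightarrow> v < b' ! j" if "v \<in> V" "j < n" for v j
      using that map_eq_conv[THEN iffD1, OF cuts, rule_format, of j] by auto
    have shapes: "length b = n" "length b' = n" "length Ts = n" "\<forall>T\<in>set Ts. labels T \<subseteq> {1..n}"
      using algs by (auto simp: A A' alg_class_def)
    have "cost (b, Ts) x = cost (b', Ts) x" if "x \<in> X" for x
    proof (rule cost_cong[OF shapes(1-3) _ shapes(4)])
      show "length x = n" using that X by auto
      show "\<forall>v\<in>set x. \<forall>j<n. v < b ! j \<longleftrightarrow> v < b' ! j" using that same_cut by (auto simp: V_def)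
    qed
    then show ?thesis unfolding A A' \<open>Ts' = Ts\<close> by (intro restrict_ext) simp
  qed
  have traces: "(\<lambda>h. restrict h X) ` cost_class enc K c n
                 = (\<lambda>A. restrict (\<lambda>x. real (cost A x)) X) ` alg_class enc K c n"
    by (simp add: cost_class_def image_image)
  show "finite ((\<lambda>h. restrict h X) ` cost_class enc K c n)"
    unfolding traces using same_trace sig_S \<open>finite S\<close> by (rule card_image_le_if_factors)
  have "card ((\<lambda>h. restrict h X) ` cost_class enc K c n) \<le> card S"
    unfolding traces using same_trace sig_S \<open>finite S\<close> by (rule card_image_le_if_factors)
  with card_S show "card ((\<lambda>h. restrict h X) ` cost_class enc K c n)
                      \<le> (2 ^ Suc L) ^ n * (card X * n + 1) ^ n"
    by linarith
qed

lemma ln_le_powr_div: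
  fixes y c :: real
  assumes "c > 0" and "y \<ge> 1"
  shows "ln y \<le> y powr c / c"
proof -
  have "c * ln y = ln (y powr c)" using assms(2) by (simp add: ln_powr)
  also have "\<dots> < y powr c" using assms(2) by (intro ln_less_self) simp
  finally show ?thesis using assms(1) by (simp add: field_simps)
qed

lemma exponent_le_of_two_power_le:
  fixes m n L :: nat and K c :: real
  assumes "c > 0" and "n \<ge> 1" and L: "real L \<le> K * real n powr c"
    and growth: "2 ^ m \<le> (2 ^ Suc L) ^ n * (m * n + 1) ^ n"
  shows "real m \<le> 4 * (K + 3 + 2 / c) * real n powr (1 + c)"
proof -
  define x where "x = real m"
  define y where "y = real n"
  have y: "y \<ge> 1" using assms(2) by (simp add: y_def)
  have "0 \<le> K * y powr c" using L by (simp add: y_def)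
  then have K: "K \<ge> 0" using y by (simp add: zero_le_mult_iff)
  show ?thesis
  proof (cases "m = 0")
    case True
    then show ?thesis using K assms(1) by simp
  next
    case False
    then have x: "x \<ge> 1" by (simp add: x_def)
    have xy: "x * y \<ge> 1" using mult_mono[OF x y] x by simp
    have "real (2 ^ m) \<le> real ((2 ^ Suc L) ^ n * (m * n + 1) ^ n)"
      using growth by (simp only: of_nat_le_iff)
    then have "(2::real) ^ m \<le> (2 ^ Suc L) ^ n * (x * y + 1) ^ n"
      unfolding x_def y_def by (simp add: add.commute)
    then have "ln ((2::real) ^ m) \<le> ln ((2 ^ Suc L) ^ n * (x * y + 1) ^ n)"
      using xy by (subst ln_le_cancel_iff) auto
    then have log_growth: "x * ln 2 \<le> y * (L + 1) * ln 2 + y * ln (x * y + 1)"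
      using xy by (simp add: x_def y_def ln_mult ln_realpow algebra_simps)
    have ln2: "1 / 2 \<le> ln (2::real)" "ln (2::real) < 1"
      using ln_le_minus_one[of "1 / 2"] ln_2_less_1 by (simp_all add: ln_div)
    have "ln (x * y + 1) \<le> ln (2 * x * y)"
      using xy by (subst ln_le_cancel_iff) auto
    also have "\<dots> = 3 * ln 2 + ln (x / (4 * y)) + 2 * ln y"
      using x y ln_realpow[of 2 2] by (simp add: ln_mult ln_div)
    also have "\<dots> \<le> 3 * ln 2 + (x / (4 * y) - 1) + 2 * (y powr c / c)"
      using x y ln_le_minus_one[of "x / (4 * y)"] ln_le_powr_div[OF assms(1) y] by simp
    finally have "y * ln (x * y + 1) \<le> y * (2 + x / (4 * y) + 2 / c * y powr c)"
      using y ln2 by (intro mult_left_mono) auto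
    also have "\<dots> = 2 * y + x / 4 + 2 / c * y powr (1 + c)"
      using y by (simp add: powr_add field_simps)
    finally have ln_term: "y * ln (x * y + 1) \<le> 2 * y + x / 4 + 2 / c * y powr (1 + c)" .
    have "(real L + 1) * ln 2 \<le> real L + 1" using ln2(2) by (intro mult_left_le) auto
    also have "\<dots> \<le> K * y powr c + 1" using L by (simp add: y_def)
    finally have "y * ((real L + 1) * ln 2) \<le> y * (K * y powr c + 1)"
      by (rule mult_left_mono) (use y in auto)
    also have "\<dots> = K * y powr (1 + c) + y"
      using y by (simp add: powr_add algebra_simps)
    finally have tree_term: "y * ((real L + 1) * ln 2) \<le> K * y powr (1 + c) + y" .
    have "y \<le> y powr (1 + c)" using y assms(1) by (simp add: powr_add ge_one_powr_ge_zero)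
    moreover have "x / 2 \<le> x * ln 2" using ln2(1) x by simp
    moreover have "(K + 3 + 2 / c) * y powr (1 + c)
                   = K * y powr (1 + c) + 3 * y powr (1 + c) + 2 / c * y powr (1 + c)"
      by (simp add: algebra_simps)
    ultimately have "x / 4 \<le> (K + 3 + 2 / c) * y powr (1 + c)"
      using log_growth ln_term tree_term by (simp add: algebra_simps)
    then have "x \<le> 4 * ((K + 3 + 2 / c) * y powr (1 + c))" by linarith
    then show ?thesis by (simp only: x_def y_def mult.assoc)
  qed
qed

theorem mainTheorem4:
  fixes c :: real and enc :: "stree \<Rightarrow> bool list"
  assumes "c > 0" and "inj enc"
  shows "\<forall>K > 0. \<exists>C. \<forall>n \<ge> 1.
           pseudo_dim {x :: real list. length x = n} (cost_class enc K c n)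
             \<le> ereal (C * real n powr (1 + c))"
proof (intro allI impI)
  fix K :: real assume "K > 0"
  have "pseudo_dim {x :: real list. length x = n} (cost_class enc K c n)
          \<le> ereal (4 * (K + 3 + 2 / c) * real n powr (1 + c))" if "n \<ge> 1" for n
    unfolding pseudo_dim_def
  proof (rule SUP_least, clarify)
    fix X :: "real list set"
    assume X: "X \<subseteq> {x. length x = n}" and shattered: "shatters (cost_class enc K c n) X"
    define L where "L = nat \<lfloor>K * real n powr c\<rfloor>"
    have L: "real L \<le> K * real n powr c" "K * real n powr c < real (Suc L)"
      using \<open>K > 0\<close> by (simp_all add: L_def) linarith+
    have "finite X" using shattered by (simp add: shatters_def)
    note traces = card_cost_traces_le[OF assms(2) \<open>finite X\<close> X L(2)]
    have "2 ^ card X \<le> (2 ^ Suc L) ^ n * (card X * n + 1) ^ n"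
      using two_pow_card_le_card_traces[OF shattered traces(1)] traces(2) by linarith
    then have "real (card X) \<le> 4 * (K + 3 + 2 / c) * real n powr (1 + c)"
      by (rule exponent_le_of_two_power_le[OF assms(1) that L(1)])
    then show "ereal (real (card X)) \<le> ereal (4 * (K + 3 + 2 / c) * real n powr (1 + c))"
      by simp
  qed
  then show "\<exists>C. \<forall>n \<ge> 1. pseudo_dim {x :: real list. length x = n} (cost_class enc K c n)
               \<le> ereal (C * real n powr (1 + c))"
    by blast
qed

end
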